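(* Let $\Gamma\subset\mathrm{SL}_2(\mathbb{R})$ be a Fuchsian group and $k$ an integer. The map $$\phi_k:\mathfrak{o}_0\to\mathfrak{o}_k,\qquad p\,\partial_\tau+q\longmapsto p\,\partial_\tau+\tfrac{k}{2}p'+q,$$ is an isomorphism of Lie algebras compatible with the $\Gamma$-actions, i.e. $\phi_k(x\|_0\gamma)=\phi_k(x)\|_k\gamma$ for all $x\in\mathfrak{o}_0$, $\gamma\in\Gamma$; its $\rho$-linear extension gives a $\Gamma$-compatible Lie algebra isomorphism $\phi_k:\mathfrak{o}_0^\rho\cong\mathfrak{o}_k^\rho$. Furthermore $\phi_k$ restricts to an isomorphism $\mathfrak{d}_0^\rho\cong\mathfrak{d}_k^\rho$.
   Context: $\mathbb{H}$ is the upper half-plane, $\mathcal{O}$ its holomorphic functions, $j_\gamma(\tau)=c\tau+d$ for $\gamma=\begin{psmatrix}a&b\\c&d\end{psmatrix}$. $\Gamma$ acts on linear differential operators by $(a\|_k\gamma)(\tau,\partial_\tau)=j_\gamma(\tau)^{-k}a(\gamma\tau,\partial_{\gamma\tau})j_\gamma(\tau)^k$ with $\partial_{\gamma\tau}=j_\gamma(\tau)^2\partial_\tau$, extended coefficientwise to power series in commuting formal variables $\rho_1,\dots,\rho_n$. $\mathfrak{o}_k=\mathcal{O}\partial_\tau\oplus\mathcal{O}$ (operators $f\partial_\tau+g$) with Lie bracket the commutator: $[f\partial_\tau+g,r\partial_\tau+s]=(fr'-rf')\partial_\tau+fs'-rg'$. $\mathfrak{d}_k=\{2p\partial_\tau+kp'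 : p\in\mathbb{C}[\tau],\deg p\le 2\}\subset\mathfrak{o}_k$. With $(\rho)$ the ideal generated by $\rho_1,\dots,\rho_n$, set $\mathfrak{o}_k^\rho=(\rho)\,\mathfrak{o}_k[[\rho_1,\dots,\rho_n]]$ and $\mathfrak{d}_k^\rho=(\rho)\,\mathfrak{d}_k[[\rho_1,\dots,\rho_n]]$, with the $\rho$-bilinearly extended bracket. *)

theory Defs
  imports "HOL-Complex_Analysis.Complex_Analysis" "HOL-Computational_Algebra.Polynomial"
begin

definition UHP :: "complex set" where
  "UHP = {z. Im z > 0}"

text \<open>Holomorphic functions on the upper half-plane, represented canonically
  (value 0 outside the half-plane, so that equality of functions is equality on UHP).\<close>
definition Ohol :: "(complex \<Rightarrow> complex) set" where
  "Ohol = {f. f holomorphic_on UHP \<and> (\<forall>z. z \<notin> UHP \<longrightarrow> f z = 0)}"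

definition dH :: "(complex \<Rightarrow> complex) \<Rightarrow> complex \<Rightarrow> complex" where
  "dH f = (\<lambda>z. if z \<in> UHP then deriv f z else 0)"

text \<open>An operator  f \<partial>_tau + g  is represented by the pair (f, g).\<close>
type_synonym op = "(complex \<Rightarrow> complex) \<times> (complex \<Rightarrow> complex)"

definition oalg :: "int \<Rightarrow> op set" where
  "oalg k = Ohol \<times> Ohol"

definition opzero :: op where
  "opzero = (\<lambda>_. 0, \<lambda>_. 0)"

definition opadd :: "op \<Rightarrow> op \<Rightarrow> op" where
  "opadd A B = (\<lambda>z. fst A z + fst B z, \<lambda>z. snd A z + snd B z)"

definition opsmul :: "complex \<Rightarrow> op \<Rightarrow> op" where
  "opsmul c A = (\<lambda>z. c * fst A z, \<lambda>z. c * snd A z)"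

text \<open>Commutator: [f\<partial>+g, r\<partial>+s] = (f r' - r f')\<partial> + f s' - r g'.\<close>
definition obr :: "op \<Rightarrow> op \<Rightarrow> op" where
  "obr A B = (\<lambda>z. fst A z * dH (fst B) z - fst B z * dH (fst A) z,
              \<lambda>z. fst A z * dH (snd B) z - fst B z * dH (snd A) z)"

definition dalg :: "int \<Rightarrow> op set" where
  "dalg k = {((\<lambda>z. if z \<in> UHP then 2 * poly p z else 0),
              (\<lambda>z. if z \<in> UHP then of_int k * poly (pderiv p) z else 0)) | p :: complex poly.
             degree p \<le> 2}"

definition phi :: "int \<Rightarrow> op \<Rightarrow> op" where
  "phi k A = (fst A, \<lambda>z. of_int k / 2 * dH (fst A) z + snd A z)"

text \<open>A real 2x2 matrix (a, b, c, d) = [[a, b], [c, d]].\<close>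
type_synonym mat2 = "real \<times> real \<times> real \<times> real"

definition SL2R :: "mat2 set" where
  "SL2R = {(a, b, c, d). a * d - b * c = 1}"

definition m2mul :: "mat2 \<Rightarrow> mat2 \<Rightarrow> mat2" where
  "m2mul M N = (case M of (a, b, c, d) \<Rightarrow> case N of (a', b', c', d') \<Rightarrow>
      (a * a' + b * c', a * b' + b * d', c * a' + d * c', c * b' + d * d'))"

definition m2one :: mat2 where
  "m2one = (1, 0, 0, 1)"

definition m2inv :: "mat2 \<Rightarrow> mat2" where
  "m2inv M = (case M of (a, b, c, d) \<Rightarrow> (d, - b, - c, a))"

definition fuchsian :: "mat2 set \<Rightarrow> bool" where
  "fuchsian G \<longleftrightarrow> G \<subseteq> SL2R \<and> m2one \<in> G \<and>
     (\<forall>M\<in>G. \<forall>N\<in>G. m2mul M N \<in> G) \<and> (\<forall>M\<in>G. m2inv M \<in> G) \<and>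
     (\<forall>M\<in>G. \<exists>e>0. \<forall>N\<in>G. dist N M < e \<longrightarrow> N = M)"

definition mob :: "mat2 \<Rightarrow> complex \<Rightarrow> complex" where
  "mob M z = (case M of (a, b, c, d) \<Rightarrow>
      (of_real a * z + of_real b) / (of_real c * z + of_real d))"

definition jfac :: "mat2 \<Rightarrow> complex \<Rightarrow> complex" where
  "jfac M z = (case M of (a, b, c, d) \<Rightarrow> of_real c * z + of_real d)"

text \<open>Slash action (a||_k gamma)(tau, \<partial>_tau) = j^{-k} a(gamma tau, j^2 \<partial>_tau) j^k, written out:
  for a = f\<partial> + g one gets  f(gamma tau) j^2 \<partial> + g(gamma tau) + k c j f(gamma tau).\<close>
definition slash :: "int \<Rightarrow> mat2 \<Rightarrow> op \<Rightarrow> op" where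
  "slash k M A = (case M of (a, b, c, d) \<Rightarrow>
     ((\<lambda>z. if z \<in> UHP then fst A (mob M z) * (jfac M z)^2 else 0),
      (\<lambda>z. if z \<in> UHP then snd A (mob M z)
                 + of_int k * of_real c * jfac M z * fst A (mob M z) else 0)))"

definition mi :: "nat \<Rightarrow> (nat \<Rightarrow> nat) set" where
  "mi n = {\<alpha>. \<forall>i\<ge>n. \<alpha> i = 0}"

type_synonym 'a ser = "(nat \<Rightarrow> nat) \<Rightarrow> 'a"

definition serI :: "nat \<Rightarrow> op set \<Rightarrow> op ser set" where
  "serI n S = {A. (\<forall>\<alpha>\<in>mi n. A \<alpha> \<in> S) \<and> (\<forall>\<alpha>. \<alpha> \<notin> mi n \<longrightarrow> A \<alpha> = opzero)
                \<and> A (\<lambda>_. 0) = opzero}"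

definition scal :: "nat \<Rightarrow> complex ser set" where
  "scal n = {S. \<forall>\<alpha>. \<alpha> \<notin> mi n \<longrightarrow> S \<alpha> = 0}"

definition sadd :: "op ser \<Rightarrow> op ser \<Rightarrow> op ser" where
  "sadd A B = (\<lambda>\<alpha>. opadd (A \<alpha>) (B \<alpha>))"

definition ssmul :: "complex ser \<Rightarrow> op ser \<Rightarrow> op ser" where
  "ssmul S A = (\<lambda>\<alpha>.
     (\<lambda>z. \<Sum>\<beta>\<in>{\<beta>. \<beta> \<le> \<alpha>}. S \<beta> * fst (A (\<lambda>i. \<alpha> i - \<beta> i)) z,
      \<lambda>z. \<Sum>\<beta>\<in>{\<beta>. \<beta> \<le> \<alpha>}. S \<beta> * snd (A (\<lambda>i. \<alpha> i - \<beta> i)) z))"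

definition sbr :: "op ser \<Rightarrow> op ser \<Rightarrow> op ser" where
  "sbr A B = (\<lambda>\<alpha>.
     (\<lambda>z. \<Sum>\<beta>\<in>{\<beta>. \<beta> \<le> \<alpha>}. fst (obr (A \<beta>) (B (\<lambda>i. \<alpha> i - \<beta> i))) z,
      \<lambda>z. \<Sum>\<beta>\<in>{\<beta>. \<beta> \<le> \<alpha>}. snd (obr (A \<beta>) (B (\<lambda>i. \<alpha> i - \<beta> i))) z))"

definition sphi :: "int \<Rightarrow> op ser \<Rightarrow> op ser" where
  "sphi k A = (\<lambda>\<alpha>. phi k (A \<alpha>))"

definition sslash :: "int \<Rightarrow> mat2 \<Rightarrow> op ser \<Rightarrow> op ser" where
  "sslash k M A = (\<lambda>\<alpha>. slash k M (A \<alpha>))"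

end

theory Submission
  imports Defs
begin

(* \<phi>\<^sub>k adds k/2 times the derivative of the vector-field part, so \<phi>\<^sub>-\<^sub>k inverts it, and it
   is linear because the derivative is. It respects brackets because the vector-field part
   f r' - r f' of [f\<partial> + g, r\<partial> + s] has derivative f r'' - r f'', which is exactly the
   second-order correction in [\<phi>\<^sub>k(f\<partial> + g), \<phi>\<^sub>k(r\<partial> + s)]. It intertwines the slash
   actions because \<gamma>' = j\<^sup>-\<^sup>2 and j' = c give (f(\<gamma>\<tau>) j\<^sup>2)' = f'(\<gamma>\<tau>) + 2 c j f(\<gamma>\<tau>), whose
   k/2 multiple is the extra term k c j f(\<gamma>\<tau>) of the weight k action. On \<rho>-series
   everything holds coefficientwise, a coefficient of a product or bracket being a sum of
   products or brackets of coefficients. Finally \<phi>\<^sub>k sends 2p\<partial> + l p' to 2p\<partial> + (l + k) p'. *)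

lemma open_UHP: "open UHP"
  unfolding UHP_def using open_halfspace_Im_gt[of 0] by simp

lemma holomorphic_on_UHP_DERIV:
  "f holomorphic_on UHP \<Longrightarrow> z \<in> UHP \<Longrightarrow> (f has_field_derivative deriv f z) (at z)"
  using open_UHP holomorphic_derivI by blast

lemma dH_eqI:
  assumes "\<And>z. z \<in> UHP \<Longrightarrow> (f has_field_derivative f' z) (at z)"
    and "\<And>z. z \<notin> UHP \<Longrightarrow> f' z = 0"
  shows "dH f = f'"
  using assms by (auto simp: dH_def fun_eq_iff DERIV_imp_deriv)

lemma dH_restrict: "dH (\<lambda>z. if z \<in> UHP then f z else 0) = dH f"
proof
  fix z show "dH (\<lambda>z. if z \<in> UHP then f z else 0) z = dH f z"
  proof (cases "z \<in> UHP")
    case True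
    then have "eventually (\<lambda>x. x \<in> UHP) (nhds z)"
      using open_UHP eventually_nhds_in_open by blast
    then have "eventually (\<lambda>x. (if x \<in> UHP then f x else 0) = f x) (nhds z)"
      by (rule eventually_mono) simp
    then have "deriv (\<lambda>z. if z \<in> UHP then f z else 0) z = deriv f z"
      by (rule deriv_cong_ev) simp
    then show ?thesis using True by (simp add: dH_def)
  qed (simp add: dH_def)
qed

lemma holomorphic_dH: "f holomorphic_on UHP \<Longrightarrow> dH f holomorphic_on UHP"
  by (rule holomorphic_transform[OF holomorphic_deriv[OF _ open_UHP]]) (simp_all add: dH_def)

lemma dH_add:
  "f holomorphic_on UHP \<Longrightarrow> g holomorphic_on UHP \<Longrightarrow>
    dH (\<lambda>z. f z + g z) = (\<lambda>z. dH f z + dH g z)"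
  by (rule dH_eqI) (auto simp: dH_def intro!: derivative_eq_intros holomorphic_on_UHP_DERIV)

lemma dH_diff:
  "f holomorphic_on UHP \<Longrightarrow> g holomorphic_on UHP \<Longrightarrow>
    dH (\<lambda>z. f z - g z) = (\<lambda>z. dH f z - dH g z)"
  by (rule dH_eqI) (auto simp: dH_def intro!: derivative_eq_intros holomorphic_on_UHP_DERIV)

lemma dH_cmult: "f holomorphic_on UHP \<Longrightarrow> dH (\<lambda>z. c * f z) = (\<lambda>z. c * dH f z)"
  by (rule dH_eqI) (auto simp: dH_def intro!: derivative_eq_intros holomorphic_on_UHP_DERIV)

lemma dH_mult:
  "f holomorphic_on UHP \<Longrightarrow> g holomorphic_on UHP \<Longrightarrow>
    dH (\<lambda>z. f z * g z) = (\<lambda>z. dH f z * g z + f z * dH g z)"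
  by (rule dH_eqI) (auto simp: dH_def intro!: derivative_eq_intros holomorphic_on_UHP_DERIV)

lemma dH_sum:
  assumes "\<And>i. i \<in> F \<Longrightarrow> f i holomorphic_on UHP"
  shows "dH (\<lambda>z. \<Sum>i\<in>F. f i z) = (\<lambda>z. \<Sum>i\<in>F. dH (f i) z)"
proof (cases "finite F")
  case True
  then show ?thesis
    by (intro dH_eqI DERIV_sum) (auto simp: dH_def assms holomorphic_on_UHP_DERIV)
qed (auto intro: dH_eqI)

lemma dH_poly: "dH (\<lambda>z. poly p z) = (\<lambda>z. if z \<in> UHP then poly (pderiv p) z else 0)"
  by (rule dH_eqI) (auto intro: poly_DERIV)

lemma oalg_holomorphic:
  "A \<in> oalg k \<Longrightarrow> fst A holomorphic_on UHP" "A \<in> oalg k \<Longrightarrow> snd A holomorphic_on UHP"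
  by (auto simp: oalg_def Ohol_def)

lemma phi_uminus_phi: "phi (- k) (phi k A) = A"
  by (simp add: phi_def)

lemma phi_oalg: "phi k ` oalg l \<subseteq> oalg m"
  using holomorphic_dH by (auto simp: phi_def oalg_def Ohol_def dH_def intro!: holomorphic_intros)

lemma bij_betw_phi:
  assumes "phi k ` S \<subseteq> T" "phi (- k) ` T \<subseteq> S"
  shows "bij_betw (phi k) S T"
  using assms phi_uminus_phi[of "- k"]
  by (intro bij_betw_byWitness[of _ "phi (- k)"]) (auto simp: phi_uminus_phi)

lemma phi_opadd:
  "A \<in> oalg l \<Longrightarrow> B \<in> oalg l \<Longrightarrow> phi k (opadd A B) = opadd (phi k A) (phi k B)"
  by (simp add: phi_def opadd_def dH_add oalg_holomorphic algebra_simps)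

lemma phi_opsmul: "A \<in> oalg l \<Longrightarrow> phi k (opsmul c A) = opsmul c (phi k A)"
  by (simp add: phi_def opsmul_def dH_cmult oalg_holomorphic algebra_simps)

lemma opsmul_oalg: "A \<in> oalg l \<Longrightarrow> opsmul c A \<in> oalg l"
  by (auto simp: opsmul_def oalg_def Ohol_def intro!: holomorphic_intros)

lemma obr_oalg: "A \<in> oalg l \<Longrightarrow> B \<in> oalg l \<Longrightarrow> obr A B \<in> oalg l"
  using holomorphic_dH by (auto simp: obr_def oalg_def Ohol_def intro!: holomorphic_intros)

lemma phi_obr:
  assumes "A \<in> oalg l" "B \<in> oalg l"
  shows "phi k (obr A B) = obr (phi k A) (phi k B)"
proof -
  obtain f g where A: "A = (f, g)" by (cases A)
  obtain r s where B: "B = (r, s)" by (cases B)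
  have hol: "f holomorphic_on UHP" "g holomorphic_on UHP"
    "r holomorphic_on UHP" "s holomorphic_on UHP"
    using assms oalg_holomorphic by (auto simp: A B)
  note hol' = hol holomorphic_dH[OF hol(1)] holomorphic_dH[OF hol(3)]
  have "dH (\<lambda>z. c * dH h z + t z) = (\<lambda>z. c * dH (dH h) z + dH t z)"
    if "h holomorphic_on UHP" "t holomorphic_on UHP" for c h t
    using that by (simp add: dH_add dH_cmult holomorphic_dH holomorphic_intros)
  note dH_phi = this[OF hol(1,2)] this[OF hol(3,4)]
  \<comment> \<open>the first-order terms f' r' cancel\<close>
  have dH_fst_obr: "dH (\<lambda>z. f z * dH r z - r z * dH f z) =
      (\<lambda>z. f z * dH (dH r) z - r z * dH (dH f) z)"
    by (simp add: dH_diff dH_mult hol' holomorphic_intros)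
  show ?thesis
    unfolding A B obr_def phi_def fst_conv snd_conv dH_phi dH_fst_obr
    by (simp add: fun_eq_iff algebra_simps)
qed

lemma jfac_nonzero:
  assumes "M \<in> SL2R" "z \<in> UHP" shows "jfac M z \<noteq> 0"
proof
  obtain a b c d where M: "M = (a, b, c, d)" by (cases M) auto
  assume "jfac M z = 0"
  then have "c * Im z = 0" "c * Re z + d = 0"
    unfolding M jfac_def complex_eq_iff by simp_all
  with assms show False by (auto simp: M SL2R_def UHP_def)
qed

lemma Im_mob:
  assumes "M \<in> SL2R" shows "Im (mob M z) = Im z / (cmod (jfac M z))\<^sup>2"
proof -
  obtain a b c d where M: "M = (a, b, c, d)" by (cases M) auto
  have "Im (mob M z) = (a * d - b * c) * Im z / (cmod (jfac M z))\<^sup>2"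
    by (simp add: M mob_def jfac_def Im_divide cmod_power2 algebra_simps)
  with assms show ?thesis by (simp add: M SL2R_def)
qed

lemma mob_UHP:
  assumes "M \<in> SL2R" "z \<in> UHP" shows "mob M z \<in> UHP"
proof -
  have "jfac M z \<noteq> 0" using assms by (rule jfac_nonzero)
  with assms show ?thesis by (simp add: UHP_def Im_mob)
qed

lemma DERIV_mob:
  assumes "M \<in> SL2R" "z \<in> UHP"
  shows "(mob M has_field_derivative 1 / (jfac M z)\<^sup>2) (at z)"
proof -
  obtain a b c d where M: "M = (a, b, c, d)" by (cases M) auto
  have "jfac M z \<noteq> 0" using assms by (rule jfac_nonzero)
  moreover have "a * d - b * c = 1" using assms(1) by (simp add: M SL2R_def)
  ultimately show ?thesis unfolding M mob_def[abs_def] jfac_def prod.case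
    by (auto intro!: derivative_eq_intros simp: power2_eq_square field_simps
        simp flip: of_real_mult of_real_diff)
qed

lemma dH_slash_fst:
  assumes M: "M = (a, b, c, d)" "M \<in> SL2R" and f: "f holomorphic_on UHP"
  shows "dH (fst (slash l M (f, g))) =
    (\<lambda>z. if z \<in> UHP then dH f (mob M z) + 2 * of_real c * jfac M z * f (mob M z) else 0)"
proof -
  have "((\<lambda>z. f (mob M z) * (jfac M z)\<^sup>2) has_field_derivative
      dH f (mob M z) + 2 * of_real c * jfac M z * f (mob M z)) (at z)" if z: "z \<in> UHP" for z
  proof -
    have mz: "mob M z \<in> UHP" using M(2) z by (rule mob_UHP)
    have "jfac M z \<noteq> 0" using M(2) z by (rule jfac_nonzero)
    moreover have "(jfac M has_field_derivative of_real c) (at z)"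
      unfolding M(1) jfac_def[abs_def] prod.case by (auto intro!: derivative_eq_intros)
    ultimately show ?thesis
      using DERIV_chain2[OF holomorphic_on_UHP_DERIV[OF f mz] DERIV_mob[OF M(2) z]] mz
      by (auto intro!: derivative_eq_intros simp: dH_def field_simps power2_eq_square)
  qed
  then show ?thesis
    unfolding slash_def M(1) prod.case fst_conv dH_restrict by (intro dH_eqI) simp_all
qed

lemma phi_slash:
  assumes "M \<in> SL2R" "A \<in> oalg m"
  shows "phi k (slash l M A) = slash (l + k) M (phi k A)"
proof -
  obtain a b c d where M: "M = (a, b, c, d)" by (cases M) auto
  obtain f g where A: "A = (f, g)" by (cases A)
  have "f holomorphic_on UHP" using oalg_holomorphic(1)[OF assms(2)] by (simp add: A)
  note dH_fst = dH_slash_fst[OF M assms(1) this, of l g]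
  show ?thesis
    using dH_fst unfolding A phi_def by (simp add: slash_def M fun_eq_iff algebra_simps)
qed

lemma phi_dalg: "phi k ` dalg l \<subseteq> dalg (l + k)"
proof
  fix B assume "B \<in> phi k ` dalg l"
  then obtain p :: "complex poly" where p: "degree p \<le> 2"
    and B: "B = phi k ((\<lambda>z. if z \<in> UHP then 2 * poly p z else 0),
                       (\<lambda>z. if z \<in> UHP then of_int l * poly (pderiv p) z else 0))"
    unfolding dalg_def by blast
  have "dH (\<lambda>z. if z \<in> UHP then 2 * poly p z else 0) =
      (\<lambda>z. if z \<in> UHP then 2 * poly (pderiv p) z else 0)"
    by (simp add: dH_restrict dH_cmult dH_poly holomorphic_intros fun_eq_iff)
  then have "B = ((\<lambda>z. if z \<in> UHP then 2 * poly p z else 0),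
                  (\<lambda>z. if z \<in> UHP then of_int (l + k) * poly (pderiv p) z else 0))"
    by (simp add: B phi_def fun_eq_iff algebra_simps)
  with p show "B \<in> dalg (l + k)" unfolding dalg_def by blast
qed

definition opsum :: "('i \<Rightarrow> op) \<Rightarrow> 'i set \<Rightarrow> op" where
  "opsum A F = ((\<lambda>z. \<Sum>i\<in>F. fst (A i) z), (\<lambda>z. \<Sum>i\<in>F. snd (A i) z))"

lemma ssmul_eq_opsum:
  "ssmul S A \<alpha> = opsum (\<lambda>\<beta>. opsmul (S \<beta>) (A (\<lambda>i. \<alpha> i - \<beta> i))) {\<beta>. \<beta> \<le> \<alpha>}"
  by (simp add: ssmul_def opsum_def opsmul_def)

lemma sbr_eq_opsum:
  "sbr A B \<alpha> = opsum (\<lambda>\<beta>. obr (A \<beta>) (B (\<lambda>i. \<alpha> i - \<beta> i))) {\<beta>. \<beta> \<le> \<alpha>}"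
  by (simp add: sbr_def opsum_def)

lemma phi_opsum:
  assumes "\<And>i. i \<in> F \<Longrightarrow> A i \<in> oalg l"
  shows "phi k (opsum A F) = opsum (\<lambda>i. phi k (A i)) F"
proof -
  have "dH (\<lambda>z. \<Sum>i\<in>F. fst (A i) z) = (\<lambda>z. \<Sum>i\<in>F. dH (fst (A i)) z)"
    using assms oalg_holomorphic by (intro dH_sum) blast
  then show ?thesis by (simp add: phi_def opsum_def sum.distrib sum_distrib_left)
qed

lemma phi_opzero: "phi k opzero = opzero"
proof -
  have "dH (\<lambda>_. 0) = (\<lambda>_. 0)" by (rule dH_eqI) auto
  then show ?thesis by (simp add: phi_def opzero_def)
qed

lemma serI_oalg_coeff: "A \<in> serI n (oalg k) \<Longrightarrow> A \<alpha> \<in> oalg k"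
  by (cases "\<alpha> \<in> mi n") (auto simp: serI_def oalg_def Ohol_def opzero_def)

lemma sphi_uminus_sphi: "sphi (- k) (sphi k A) = A"
  by (simp add: sphi_def phi_uminus_phi)

lemma sphi_serI: "phi k ` S \<subseteq> T \<Longrightarrow> sphi k ` serI n S \<subseteq> serI n T"
  by (auto simp: serI_def sphi_def phi_opzero)

lemma bij_betw_sphi:
  assumes "phi k ` S \<subseteq> T" "phi (- k) ` T \<subseteq> S"
  shows "bij_betw (sphi k) (serI n S) (serI n T)"
  using sphi_serI[OF assms(1)] sphi_serI[OF assms(2)] sphi_uminus_sphi[of "- k"]
  by (intro bij_betw_byWitness[of _ "sphi (- k)"]) (auto simp: sphi_uminus_sphi)

lemma sphi_sadd:
  assumes "A \<in> serI n (oalg l)" "B \<in> serI n (oalg l)"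
  shows "sphi k (sadd A B) = sadd (sphi k A) (sphi k B)"
  by (simp add: fun_eq_iff sphi_def sadd_def
      phi_opadd[OF serI_oalg_coeff[OF assms(1)] serI_oalg_coeff[OF assms(2)]])

lemma sphi_ssmul:
  assumes "A \<in> serI n (oalg l)"
  shows "sphi k (ssmul S A) = ssmul S (sphi k A)"
  using serI_oalg_coeff[OF assms]
  by (simp add: fun_eq_iff sphi_def ssmul_eq_opsum
      phi_opsum[where l = l] phi_opsmul[where l = l] opsmul_oalg)

lemma sphi_sbr:
  assumes "A \<in> serI n (oalg l)" "B \<in> serI n (oalg l)"
  shows "sphi k (sbr A B) = sbr (sphi k A) (sphi k B)"
  using serI_oalg_coeff[OF assms(1)] serI_oalg_coeff[OF assms(2)]
  by (simp add: fun_eq_iff sphi_def sbr_eq_opsum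
      phi_opsum[where l = l] phi_obr[where l = l] obr_oalg)

lemma sphi_sslash:
  assumes "M \<in> SL2R" "A \<in> serI n (oalg m)"
  shows "sphi k (sslash l M A) = sslash (l + k) M (sphi k A)"
  by (simp add: fun_eq_iff sphi_def sslash_def
      phi_slash[OF assms(1) serI_oalg_coeff[OF assms(2)]])

theorem proposition3p1:
  fixes \<Gamma> :: "mat2 set" and k :: int and n :: nat
  assumes "fuchsian \<Gamma>"
  shows
    "bij_betw (phi k) (oalg 0) (oalg k)
     \<and> (\<forall>A\<in>oalg 0. \<forall>B\<in>oalg 0. phi k (opadd A B) = opadd (phi k A) (phi k B))
     \<and> (\<forall>c. \<forall>A\<in>oalg 0. phi k (opsmul c A) = opsmul c (phi k A))
     \<and> (\<forall>A\<in>oalg 0. \<forall>B\<in>oalg 0. phi k (obr A B) = obr (phi k A) (phi k B))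
     \<and> (\<forall>\<gamma>\<in>\<Gamma>. \<forall>A\<in>oalg 0. phi k (slash 0 \<gamma> A) = slash k \<gamma> (phi k A))
     \<and> bij_betw (sphi k) (serI n (oalg 0)) (serI n (oalg k))
     \<and> (\<forall>A\<in>serI n (oalg 0). \<forall>B\<in>serI n (oalg 0). sphi k (sadd A B) = sadd (sphi k A) (sphi k B))
     \<and> (\<forall>S\<in>scal n. \<forall>A\<in>serI n (oalg 0). sphi k (ssmul S A) = ssmul S (sphi k A))
     \<and> (\<forall>A\<in>serI n (oalg 0). \<forall>B\<in>serI n (oalg 0). sphi k (sbr A B) = sbr (sphi k A) (sphi k B))
     \<and> (\<forall>\<gamma>\<in>\<Gamma>. \<forall>A\<in>serI n (oalg 0). sphi k (sslash 0 \<gamma> A) = sslash k \<gamma> (sphi k A))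
     \<and> bij_betw (sphi k) (serI n (dalg 0)) (serI n (dalg k))"
proof -
  have \<Gamma>: "\<Gamma> \<subseteq> SL2R" using assms by (simp add: fuchsian_def)
  note phi_slash_0 = phi_slash[where l = 0, simplified] and sphi_sslash_0 = sphi_sslash[where l = 0, simplified]
  have phi_dalg_0: "phi k ` dalg 0 \<subseteq> dalg k" and phi_dalg_k: "phi (- k) ` dalg k \<subseteq> dalg 0"
    using phi_dalg[of k 0] phi_dalg[of "- k" k] by simp_all
  show ?thesis
  proof (intro conjI ballI allI)
    show "bij_betw (phi k) (oalg 0) (oalg k)"
      by (rule bij_betw_phi[OF phi_oalg phi_oalg])
    show "bij_betw (sphi k) (serI n (oalg 0)) (serI n (oalg k))"
      by (rule bij_betw_sphi[OF phi_oalg phi_oalg])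
    show "bij_betw (sphi k) (serI n (dalg 0)) (serI n (dalg k))"
      by (rule bij_betw_sphi[OF phi_dalg_0 phi_dalg_k])
  qed (use \<Gamma> in \<open>auto simp: phi_opadd phi_opsmul phi_obr phi_slash_0 sphi_sadd sphi_ssmul sphi_sbr sphi_sslash_0\<close>)
qed

end
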